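(* For $n \ge 0$ let $w(n,0)$ denote the number of compositions of $n$ with all parts in $\{1,2\}$ having exactly $0$ water cells. Then \[ \sum_{n \ge 0} w(n,0) q^n = \frac{1}{1-q} + \frac{q^2}{(1-q)^2(1-q^2)} = \frac{1-q+q^3}{1 - 2 q + 2 q^3 - q^4}. \] Moreover, for each $n \ge 0$ the following values are equal: (a) $w(n,0)$; (b) $\lfloor n^2/4 \rfloor + 1$; (c) $w(n-2,0) + n - 1$ (for $n \ge 2$); (d) $2w(n-1,0) - 2w(n-3,0) + w(n-4,0)$ (for $n \ge 4$).
   Context: A composition of $n \ge 0$ is a finite sequence $(c_1,\dots,c_t)$ of positive integers with $c_1+\cdots+c_t=n$; the empty composition is the unique composition of $0$. Let $C_{12}(n)$ be the set of compositions of $n$ all of whose parts lie in $\{1,2\}$. The number of water cells of a composition $(c_1,\dots,c_t)$ is $\sum_{i=1}^{t} \max\bigl(0, \min(\max_{j \le i} c_j, \max_{j \ge i} c_j) - c_i\bigr)$ (the number of unit squares that would hold water poured over its bargraph, in which column $i$ has height $c_i$). For $n,k \ge 0$, $W(n,k)$ is the set of compositions in $C_{12}(n)$ with exactly $k$ water cells and $w(n,k)=|W(n,k)|$. *)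

theory Defs
  imports Main "HOL-Computational_Algebra.Formal_Power_Series"
begin

definition C12 :: "nat \<Rightarrow> nat list set" where
  "C12 n = {c. set c \<subseteq> {1,2} \<and> sum_list c = n}"

text \<open>Water cells: column i (0-based) holds min(max of c_0..c_i, max of c_i..c_(t-1)) - c_i
  (truncated subtraction on nat realises max(0, ...)).\<close>
definition water :: "nat list \<Rightarrow> nat" where
  "water c = (\<Sum>i<length c.
      min (Max (set (take (Suc i) c))) (Max (set (drop i c))) - c ! i)"

definition W :: "nat \<Rightarrow> nat \<Rightarrow> nat list set" where
  "W n k = {c \<in> C12 n. water c = k}"

definition w :: "nat \<Rightarrow> nat \<Rightarrow> nat" where
  "w n k = card (W n k)"

end

theory Submission
  imports Defs
begin

text \<open>With parts in {1,2} a column holds water exactly when it is a 1 with a 2 somewhere on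
  each side, so the waterless compositions are those of the shape \<open>1\<^sup>a 2\<^sup>b 1\<^sup>c\<close>.
  Splitting off the first part, such a composition starting with 1 continues as any
  waterless one, while one starting with 2 continues as a nonincreasing one \<open>2\<^sup>b 1\<^sup>c\<close>,
  of which there are \<open>\<lfloor>m/2\<rfloor> + 1\<close> of size m. Summing gives \<open>w(n,0) = \<lfloor>n\<^sup>2/4\<rfloor> + 1\<close>, from
  which both recurrences and the rational generating function follow.\<close>

lemma length_le_sum_list: "0 \<notin> set c \<Longrightarrow> length c \<le> sum_list (c :: nat list)"
  by (induction c) auto

lemma finite_C12: "finite (C12 n)"
proof -
  have "C12 n \<subseteq> {c. set c \<subseteq> {1,2} \<and> length c \<le> n}"
    using length_le_sum_list by (fastforce simp: C12_def)
  then show ?thesis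
    by (rule finite_subset) (simp add: finite_lists_length_le)
qed

lemma C12_0: "C12 0 = {[]}"
proof -
  have "c = []" if "set c \<subseteq> {1,2}" "sum_list c = 0" for c :: "nat list"
    using that by (cases c) auto
  then show ?thesis
    by (auto simp: C12_def)
qed

lemma C12_1: "C12 (Suc 0) = {[1]}"
proof -
  have "c = [1]" if "c \<in> C12 (Suc 0)" for c
  proof -
    from that obtain x ys where "c = x # ys" "x = 1" "ys \<in> C12 0"
      by (cases c) (auto simp: C12_def)
    then show ?thesis
      by (simp add: C12_0)
  qed
  then show ?thesis
    by (auto simp: C12_def)
qed

lemma C12_Suc_Suc: "C12 (Suc (Suc n)) = Cons 1 ` C12 (Suc n) \<union> Cons 2 ` C12 n"
proof (intro set_eqI iffI)
  fix c assume c: "c \<in> C12 (Suc (Suc n))"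
  then obtain x ys where "c = x # ys" "x = 1 \<or> x = 2"
    by (cases c) (auto simp: C12_def)
  with c show "c \<in> Cons 1 ` C12 (Suc n) \<union> Cons 2 ` C12 n"
    by (auto simp: C12_def)
qed (auto simp: C12_def)

definition C12_with :: "nat \<Rightarrow> (nat list \<Rightarrow> bool) \<Rightarrow> nat list set" where
  "C12_with n P = {c \<in> C12 n. P c}"

lemma card_C12_with_Suc_Suc:
  assumes "\<And>ys. ys \<in> C12 (Suc n) \<Longrightarrow> P (1 # ys) = Q1 ys"
    and "\<And>ys. ys \<in> C12 n \<Longrightarrow> P (2 # ys) = Q2 ys"
  shows "card (C12_with (Suc (Suc n)) P) = card (C12_with (Suc n) Q1) + card (C12_with n Q2)"
proof -
  have "C12_with (Suc (Suc n)) P = Cons 1 ` C12_with (Suc n) Q1 \<union> Cons 2 ` C12_with n Q2"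
    using assms by (auto simp: C12_with_def C12_Suc_Suc)
  moreover have "finite (C12_with m Q)" for m Q
    using finite_C12 by (simp add: C12_with_def)
  moreover have "Cons 1 ` A \<inter> Cons 2 ` B = {}" for A B :: "nat list set"
    by auto
  ultimately show ?thesis
    by (simp add: card_Un_disjoint card_image)
qed

lemma C12_with_no_2: "C12_with n (\<lambda>c. 2 \<notin> set c) = {replicate n 1}"
proof (intro set_eqI iffI)
  fix c assume "c \<in> C12_with n (\<lambda>c. 2 \<notin> set c)"
  then have ones: "set c \<subseteq> {1}" and sum: "sum_list c = n"
    by (auto simp: C12_with_def C12_def)
  define m where "m = length c"
  have c: "c = replicate m 1"
    using ones unfolding m_def by (metis replicate_length_same singletonD subsetD)
  with sum have "m = n"
    by (simp add: sum_list_replicate)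
  with c show "c \<in> {replicate n 1}"
    by simp
qed (auto simp: C12_with_def C12_def sum_list_replicate)

lemma nonincreasing_Cons_1:
  "set ys \<subseteq> {1,2} \<Longrightarrow> sorted_wrt (\<ge>) (1 # ys) \<longleftrightarrow> 2 \<notin> set (ys :: nat list)"
  by (induction ys) auto

lemma card_C12_nonincreasing: "card (C12_with n (sorted_wrt (\<ge>))) = n div 2 + 1"
proof (induction n rule: induct_nat_012)
  case (ge2 n)
  have "card (C12_with (Suc (Suc n)) (sorted_wrt (\<ge>)))
      = card (C12_with (Suc n) (\<lambda>c. 2 \<notin> set c)) + card (C12_with n (sorted_wrt (\<ge>)))"
  proof (rule card_C12_with_Suc_Suc)
    show "sorted_wrt (\<ge>) (1 # ys) \<longleftrightarrow> 2 \<notin> set ys" if "ys \<in> C12 (Suc n)" for ys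
      using that nonincreasing_Cons_1 by (simp add: C12_def)
    show "sorted_wrt (\<ge>) (2 # ys) \<longleftrightarrow> sorted_wrt (\<ge>) ys" if "ys \<in> C12 n" for ys
      using that by (auto simp: C12_def)
  qed
  with ge2 show ?case
    by (simp add: C12_with_no_2)
qed (simp_all add: C12_with_def C12_0 C12_1 Collect_conv_if)

definition no_valley :: "nat list \<Rightarrow> bool" where
  "no_valley c \<longleftrightarrow>
     (\<forall>i<length c. c ! i = 1 \<longrightarrow> 2 \<in> set (take i c) \<longrightarrow> 2 \<notin> set (drop (Suc i) c))"

lemma no_valley_Cons_1: "no_valley (1 # ys) \<longleftrightarrow> no_valley ys"
  unfolding no_valley_def by (simp only: length_Cons All_less_Suc2) auto

lemma no_valley_Cons_2:
  assumes "set ys \<subseteq> {1,2}"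
  shows "no_valley (2 # ys) \<longleftrightarrow> sorted_wrt (\<ge>) ys"
proof -
  have "no_valley (2 # ys) \<longleftrightarrow> (\<forall>i<length ys. ys ! i = 1 \<longrightarrow> 2 \<notin> set (drop (Suc i) ys))"
    unfolding no_valley_def by (simp only: length_Cons All_less_Suc2) auto
  also have "\<dots> \<longleftrightarrow> sorted_wrt (\<ge>) ys"
    using assms
  proof (induction ys)
    case (Cons y ys)
    have "(\<forall>i<length (y # ys). (y # ys) ! i = 1 \<longrightarrow> 2 \<notin> set (drop (Suc i) (y # ys)))
        \<longleftrightarrow> (y = 1 \<longrightarrow> 2 \<notin> set ys) \<and> sorted_wrt (\<ge>) ys"
      using Cons by (simp only: length_Cons All_less_Suc2) simp
    moreover have "(\<forall>z\<in>set ys. z \<le> y) \<longleftrightarrow> (y = 1 \<longrightarrow> 2 \<notin> set ys)"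
      using Cons.prems by auto
    ultimately show ?case
      by simp
  qed simp
  finally show ?thesis .
qed

lemma Suc_square_div_4: "(Suc n)\<^sup>2 div 4 = n\<^sup>2 div 4 + Suc n div 2"
proof (cases "even n")
  case True
  then obtain j where n: "n = 2 * j" ..
  then have "(Suc n)\<^sup>2 = 4 * (j * j + j) + 1" "n\<^sup>2 = 4 * (j * j)"
    by (simp_all add: power2_eq_square algebra_simps)
  with n show ?thesis
    by simp
next
  case False
  then obtain j where n: "n = 2 * j + 1" ..
  then have "(Suc n)\<^sup>2 = 4 * ((j + 1) * (j + 1))" "n\<^sup>2 = 4 * (j * j + j) + 1"
    by (simp_all add: power2_eq_square algebra_simps)
  with n show ?thesis
    by simp
qed

lemma Suc_Suc_square_div_4: "(Suc (Suc n))\<^sup>2 div 4 = n\<^sup>2 div 4 + Suc n"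
proof -
  have "(Suc (Suc n))\<^sup>2 = n\<^sup>2 + 4 * Suc n"
    by (simp add: power2_eq_square algebra_simps)
  then show ?thesis
    by simp
qed

lemma card_C12_no_valley: "card (C12_with n no_valley) = n\<^sup>2 div 4 + 1"
proof (induction n rule: induct_nat_012)
  case (ge2 n)
  have "card (C12_with (Suc (Suc n)) no_valley)
      = card (C12_with (Suc n) no_valley) + card (C12_with n (sorted_wrt (\<ge>)))"
  proof (rule card_C12_with_Suc_Suc)
    show "no_valley (1 # ys) \<longleftrightarrow> no_valley ys" for ys
      by (rule no_valley_Cons_1)
    show "no_valley (2 # ys) \<longleftrightarrow> sorted_wrt (\<ge>) ys" if "ys \<in> C12 n" for ys
      using that no_valley_Cons_2 by (simp add: C12_def)
  qed
  also have "\<dots> = (Suc n)\<^sup>2 div 4 + 1 + (n div 2 + 1)"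
    using ge2 card_C12_nonincreasing by simp
  also have "\<dots> = (Suc (Suc n))\<^sup>2 div 4 + 1"
    by (simp only: Suc_square_div_4[of "Suc n"])
  finally show ?case .
qed (simp_all add: C12_with_def C12_0 C12_1 Collect_conv_if no_valley_def)

lemma Max_subset_1_2:
  assumes "finite S" "S \<noteq> {}" "S \<subseteq> {1, 2 :: nat}"
  shows "Max S = (if 2 \<in> S then 2 else 1)"
proof (cases "2 \<in> S")
  case True
  with assms show ?thesis
    by (intro Max_eqI) auto
next
  case False
  with assms have "S = {1}"
    by auto
  then show ?thesis
    by simp
qed

lemma column_water_eq_0_iff:
  fixes c :: "nat list"
  assumes c: "set c \<subseteq> {1,2}" and i: "i < length c"
  shows "min (Max (set (take (Suc i) c))) (Max (set (drop i c))) - c ! i = 0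
    \<longleftrightarrow> \<not> (c ! i = 1 \<and> 2 \<in> set (take i c) \<and> 2 \<in> set (drop (Suc i) c))"
proof -
  have ci: "c ! i \<in> {1,2}"
    using c i nth_mem by blast
  have take: "set (take (Suc i) c) = insert (c ! i) (set (take i c))"
    using i by (simp add: take_Suc_conv_app_nth)
  have drop: "set (drop i c) = insert (c ! i) (set (drop (Suc i) c))"
    using i by (simp add: Cons_nth_drop_Suc[symmetric])
  have parts: "set (take i c) \<subseteq> {1,2}" "set (drop (Suc i) c) \<subseteq> {1,2}"
    using c set_take_subset set_drop_subset by (metis subset_trans)+
  have "Max (set (take (Suc i) c)) = (if 2 \<in> set (take (Suc i) c) then 2 else 1)"
    by (rule Max_subset_1_2) (use take ci parts in auto)
  moreover have "Max (set (drop i c)) = (if 2 \<in> set (drop i c) then 2 else 1)"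
    by (rule Max_subset_1_2) (use drop ci parts in auto)
  ultimately show ?thesis
    using ci unfolding take drop by auto
qed

lemma water_eq_0_iff_no_valley:
  assumes "set c \<subseteq> {1,2}"
  shows "water c = 0 \<longleftrightarrow> no_valley c"
proof -
  have "water c = 0
      \<longleftrightarrow> (\<forall>i<length c. min (Max (set (take (Suc i) c))) (Max (set (drop i c))) - c ! i = 0)"
    unfolding water_def by (simp only: sum_eq_0_iff finite_lessThan) blast
  also have "\<dots> \<longleftrightarrow> no_valley c"
    unfolding no_valley_def using column_water_eq_0_iff[OF assms] by auto
  finally show ?thesis .
qed

lemma w_0_eq: "w n 0 = n\<^sup>2 div 4 + 1"
proof -
  have "W n 0 = C12_with n no_valley"
    by (auto simp: W_def C12_with_def C12_def water_eq_0_iff_no_valley)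
  then show ?thesis
    by (simp add: w_def card_C12_no_valley)
qed

lemma w_0_Suc_Suc: "w (Suc (Suc n)) 0 = w n 0 + Suc n"
  by (simp add: w_0_eq Suc_Suc_square_div_4)

lemma w_0_recurrence_2: "n \<ge> 2 \<Longrightarrow> w n 0 = w (n - 2) 0 + n - 1"
  using w_0_Suc_Suc[of "n - 2"] by (simp add: Suc_diff_Suc numeral_2_eq_2)

lemma w_0_recurrence_4:
  assumes "n \<ge> 4"
  shows "int (w n 0) = 2 * int (w (n - 1) 0) - 2 * int (w (n - 3) 0) + int (w (n - 4) 0)"
proof -
  obtain m where n: "n = m + 4"
    using assms by (metis le_add_diff_inverse2)
  show ?thesis
    using w_0_Suc_Suc[of m] w_0_Suc_Suc[of "Suc m"] w_0_Suc_Suc[of "Suc (Suc m)"]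
    by (simp add: n numeral_eq_Suc)
qed

lemma fps_quarter_square_partial_fractions:
  "inverse (1 - fps_X) + fps_X ^ 2 / ((1 - fps_X) ^ 2 * (1 - fps_X ^ 2))
     = (1 - fps_X + fps_X ^ 3) / (1 - 2 * fps_X + 2 * fps_X ^ 3 - fps_X ^ 4 :: 'a::field fps)"
proof -
  define D :: "'a fps" where "D = (1 - fps_X) ^ 2 * (1 - fps_X ^ 2)"
  have D_eq: "D = 1 - 2 * fps_X + 2 * fps_X ^ 3 - fps_X ^ 4"
    by (simp add: D_def algebra_simps power2_eq_square power3_eq_cube power4_eq_xxxx)
  then have "is_unit D"
    by simp
  have "inverse (1 - fps_X) * D = (inverse (1 - fps_X) * (1 - fps_X)) * ((1 - fps_X) * (1 - fps_X ^ 2))"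
    by (simp add: D_def power2_eq_square mult_ac)
  also have "\<dots> = (1 - fps_X) * (1 - fps_X ^ 2)"
    by (simp add: inverse_mult_eq_1)
  finally have "(inverse (1 - fps_X) + fps_X ^ 2 / D) * D = (1 - fps_X) * (1 - fps_X ^ 2) + fps_X ^ 2"
    using \<open>is_unit D\<close> by (simp add: distrib_right unit_imp_dvd)
  also have "\<dots> = 1 - fps_X + fps_X ^ 3"
    by (simp add: algebra_simps power2_eq_square power3_eq_cube)
  finally have "inverse (1 - fps_X) + fps_X ^ 2 / D = (1 - fps_X + fps_X ^ 3) / D"
    using \<open>is_unit D\<close> by (metis nonzero_mult_div_cancel_right not_is_unit_0)
  then show ?thesis
    by (simp add: D_def [symmetric] D_eq)
qed

lemma fps_w_0_times_denominator:
  "Abs_fps (\<lambda>n. real (w n 0)) * (1 - 2 * fps_X + 2 * fps_X ^ 3 - fps_X ^ 4) = 1 - fps_X + fps_X ^ 3"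
proof (rule fps_ext)
  fix n
  define A where "A = Abs_fps (\<lambda>n. real (w n 0))"
  have two: "fps_nth (2 * f) n = 2 * fps_nth f n" for f :: "real fps"
    by (metis fps_mult_left_const_nth numeral_fps_const)
  have "fps_nth (A * (1 - 2 * fps_X + 2 * fps_X ^ 3 - fps_X ^ 4)) n
      = fps_nth (A - 2 * (fps_X * A) + 2 * (fps_X ^ 3 * A) - fps_X ^ 4 * A) n"
    by (simp add: algebra_simps)
  also have "\<dots> = real (w n 0) - 2 * (if n < 1 then 0 else real (w (n - 1) 0))
      + 2 * (if n < 3 then 0 else real (w (n - 3) 0)) - (if n < 4 then 0 else real (w (n - 4) 0))"
    unfolding fps_sub_nth fps_add_nth two fps_X_power_mult_nth[of 1, simplified] fps_X_power_mult_nth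
    by (simp add: A_def)
  also have "\<dots> = (if n = 0 then 1 else 0) - (if n = 1 then 1 else 0) + (if n = 3 then 1 else 0)"
  proof (cases "n \<ge> 4")
    case True
    then have "real_of_int (int (w n 0))
        = real_of_int (2 * int (w (n - 1) 0) - 2 * int (w (n - 3) 0) + int (w (n - 4) 0))"
      by (simp only: w_0_recurrence_4)
    with True show ?thesis
      by simp
  next
    case False
    then have "n = 0 \<or> n = 1 \<or> n = 2 \<or> n = 3"
      by auto
    then show ?thesis
      by (auto simp: w_0_eq)
  qed
  also have "\<dots> = fps_nth (1 - fps_X + fps_X ^ 3 :: real fps) n"
    by (simp add: fps_X_power_nth fps_X_nth)
  finally show "fps_nth (A * (1 - 2 * fps_X + 2 * fps_X ^ 3 - fps_X ^ 4)) n
      = fps_nth (1 - fps_X + fps_X ^ 3 :: real fps) n" .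
qed

lemma fps_w_0:
  "Abs_fps (\<lambda>n. real (w n 0)) = (1 - fps_X + fps_X ^ 3) / (1 - 2 * fps_X + 2 * fps_X ^ 3 - fps_X ^ 4)"
proof -
  have "fps_nth (1 - 2 * fps_X + 2 * fps_X ^ 3 - fps_X ^ 4 :: real fps) 0 = 1"
    by simp
  then have "(1 - 2 * fps_X + 2 * fps_X ^ 3 - fps_X ^ 4 :: real fps) \<noteq> 0"
    by (metis fps_zero_nth zero_neq_one)
  with fps_w_0_times_denominator show ?thesis
    by (metis nonzero_mult_div_cancel_right)
qed

theorem theorem2p1:
  shows "Abs_fps (\<lambda>n. of_nat (w n 0) :: real)
           = inverse (1 - fps_X) + fps_X ^ 2 / ((1 - fps_X) ^ 2 * (1 - fps_X ^ 2))
       \<and> Abs_fps (\<lambda>n. of_nat (w n 0) :: real)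
           = (1 - fps_X + fps_X ^ 3) / (1 - 2 * fps_X + 2 * fps_X ^ 3 - fps_X ^ 4)
       \<and> (\<forall>n. w n 0 = n ^ 2 div 4 + 1)
       \<and> (\<forall>n\<ge>2. w n 0 = w (n - 2) 0 + n - 1)
       \<and> (\<forall>n\<ge>4. int (w n 0) = 2 * int (w (n - 1) 0) - 2 * int (w (n - 3) 0) + int (w (n - 4) 0))"
  unfolding fps_w_0 fps_quarter_square_partial_fractions
  using w_0_eq w_0_recurrence_2 w_0_recurrence_4 by blast

end
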